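(* Let $\Pi$ be a score-at-end WPTS, let $\Phi_{\mathcal B}$ be the predicate $\bigwedge_{x\in V_p}x\in\mathcal B(x)$ for a truncation function $\mathcal B$, and let $\mathcal M:\mathbb{R}^{|V_p|}\to[0,\infty)$ be a bounded function. Let $\Pi_{\mathcal B,\mathcal M}$ be the truncated WPTS. (1) Suppose that for every transition $\langle\ell,\phi,F_1,\dots,F_k\rangle$ of $\Pi$ having a fork whose destination is not $\ell_{\mathrm{out}}$, and every valuation $\mathbf v$ with $(\ell,\mathbf v)$ reachable in $\Pi$, $\mathbf v\models\phi$ and $\mathbf v\not\models\Phi_{\mathcal B}$, we have $\mathrm{ew}_\Pi(\ell,\mathbf v)\le\mathcal M(\mathbf v)$. Then $[\![\Pi]\!]_{\mathbf v_{\mathrm{init}}}(\mathbb{R}^{|V_p|})\le[\![\Pi_{\mathcal B,\mathcal M}]\!]_{\mathbf v_{\mathrm{init}}}(\mathbb{R}^{|V_p|})$ for all $\mathbf v_{\mathrm{init}}\in\operatorname{supp}\mu_{\mathrm{init}}$. (2) If instead $\mathrm{ew}_\Pi(\ell,\mathbf v)\ge\mathcal M(\mathbf v)$ for all such $(\ell,\mathbf v)$, then $[\![\Pi]\!]_{\mathbf v_{\mathrm{init}}}(\mathbb{R}^{|V_p|})\ge[\![\Pi_{\mathcal B,\mathcal M}]\!]_{\mathbf v_{\mathrm{init}}}(\mathbb{R}^{|V_p|})$ for all $\mathbf v_{\mathrm{init}}\in\operatorname{supp}\mu_{\mathrm{init}}$.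
   Context: A WPTS is a tuple $\Pi=(V_p,V_r,L,\ell_{\mathrm{init}},\ell_{\mathrm{out}},\mu_{\mathrm{init}},\mathcal D,\mathfrak T)$: $V_p,V_r$ finite disjoint sets of program and sampling variables; $L$ finite set of locations with $\ell_{\mathrm{init}},\ell_{\mathrm{out}}\in L$; $\mu_{\mathrm{init}}$ a probability distribution on $\mathbb{R}^{|V_p|}$ with bounded support; $\mathcal D$ a product probability distribution on $\mathbb{R}^{|V_r|}$; $\mathfrak T$ a finite set of transitions $\langle\ell,\phi,F_1,\dots,F_k\rangle$ with measurable guard $\phi$ and forks $F_j=\langle\ell'_j,p_j,\mathrm{upd}_j,\mathrm{wt}_j\rangle$ ($p_j\in(0,1]$, $\sum_jp_j=1$, measurable $\mathrm{upd}_j:\mathbb{R}^{|V_p|}\times\mathbb{R}^{|V_r|}\to\mathbb{R}^{|V_p|}$, measurable $\mathrm{wt}_j:\mathbb{R}^{|V_p|}\times\mathbb{R}^{|V_r|}\to[0,\infty)$), such that for each location $\ell$ that is not a termination location and each $\mathbf v$ exactly one transition from $\ell$ has guard satisfied by $\mathbf v$. Runs from a state $(\ell,\mathbf v)$ start with weight $1$; at a termination location the run stays; otherwise the enabled transition is taken, fork $j$ chosen with probability $p_j$, $\mathbf r\sim\mathcal D$ sampled, next weighted state $(\ell'_j,\mathrm{upd}_j(\mathbf v,\mathbf r),w\cdot\mathrm{wt}_j(\mathbf v,\mathbf r))$. $T$ is the first time a termination location is reached, $\hat w_T$ the weight then. $\mathrm{ew}_\Pi(\ell,\mathbf v):=\mathbb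 E_{(\ell,\mathbf v)}[\mathbf 1_{T<\infty}\hat w_T]$ and $[\![\Pi]\!]_{\mathbf v}(\mathbb{R}^{|V_p|}):=\mathrm{ew}_\Pi(\ell_{\mathrm{init}},\mathbf v)$. A state is reachable if it occurs in some run from $(\ell_{\mathrm{init}},\mathbf v_0)$, $\mathbf v_0\in\operatorname{supp}\mu_{\mathrm{init}}$. $\Pi$ is score-at-end if: (i) $\mathbb P_{(\ell_{\mathrm{init}},\mathbf v)}(T<\infty)=1$ for all $\mathbf v\in\operatorname{supp}\mu_{\mathrm{init}}$; (ii) exactly one transition has a fork with destination $\ell_{\mathrm{out}}$, of the form $\langle\ell,\phi,F\rangle$ with single fork $F=\langle\ell_{\mathrm{out}},1,\mathrm{id},\mathrm{wt}\rangle$, $\mathrm{id}(\mathbf v,\mathbf r)=\mathbf v$, $0\le\mathrm{wt}\le M$ for a constant $M>0$; (iii) every other fork has score function constantly $1$. A truncation function $\mathcal B$ maps each $x\in V_p$ to a bounded interval $\mathcal B(x)\subseteq\mathbb{R}$. The truncated WPTS $\Pi_{\mathcal B,\mathcal M}$ has locations $L\cup\{\sharp\}$ with $\sharp$ fresh, both $\ell_{\mathrm{out}}$ and $\sharp$ are termination locations (runs stay there), the same $V_p,V_r,\ell_{\mathrm{init}},\mu_{\mathrm{init}},\mathcal D$, and transitions: for each transition $\langle\ell,\phi,F_1,\dots,F_k\rangle$ of $\Pi$ with $\ell\ne\ell_{\mathrm{out}}$, (a) $\langle\ell,\phi\wedge\Phi_{\mathcal B},F_1,\dots,F_k\rangle$,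 and (b) $\langle\ell,\phi\wedge\neg\Phi_{\mathcal B},F^{\sharp}_1,\dots,F^{\sharp}_k\rangle$ where for $F=\langle\ell',p,\mathrm{upd},\mathrm{wt}\rangle$, $F^\sharp:=F$ if $\ell'=\ell_{\mathrm{out}}$ and otherwise $F^\sharp:=\langle\sharp,p,\mathrm{upd},\mathcal M'\rangle$ with score function $\mathcal M'(\mathbf v,\mathbf r):=\mathcal M(\mathbf v)$. *)

theory Defs
  imports "HOL-Probability.Probability"
begin

text \<open>Valuations of the program variables V_p are vectors in real^'p (the finite
type 'p indexes V_p); samples of the sampling variables V_r are vectors in real^'r.\<close>

type_synonym ('p, 'r) upd_fun = "real^'p \<Rightarrow> real^'r \<Rightarrow> real^'p"
type_synonym ('p, 'r) score_fun = "real^'p \<Rightarrow> real^'r \<Rightarrow> real"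

type_synonym ('l, 'p, 'r) fork = "'l \<times> real \<times> ('p, 'r) upd_fun \<times> ('p, 'r) score_fun"

type_synonym ('l, 'p, 'r) transition = "'l \<times> (real^'p) set \<times> ('l, 'p, 'r) fork list"

definition f_dest :: "('l, 'p::finite, 'r::finite) fork \<Rightarrow> 'l" where
  "f_dest f = fst f"
definition f_prob :: "('l, 'p::finite, 'r::finite) fork \<Rightarrow> real" where
  "f_prob f = fst (snd f)"
definition f_upd :: "('l, 'p::finite, 'r::finite) fork \<Rightarrow> ('p, 'r) upd_fun" where
  "f_upd f = fst (snd (snd f))"
definition f_wt :: "('l, 'p::finite, 'r::finite) fork \<Rightarrow> ('p, 'r) score_fun" where
  "f_wt f = snd (snd (snd f))"

definition t_src :: "('l, 'p::finite, 'r::finite) transition \<Rightarrow> 'l" where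
  "t_src t = fst t"
definition t_guard :: "('l, 'p::finite, 'r::finite) transition \<Rightarrow> (real^'p) set" where
  "t_guard t = fst (snd t)"
definition t_forks :: "('l, 'p::finite, 'r::finite) transition \<Rightarrow> ('l, 'p, 'r) fork list" where
  "t_forks t = snd (snd t)"

record ('l, 'p::finite, 'r::finite) wpts =
  locs :: "'l set"
  l_init :: 'l
  l_out :: 'l
  mu_init :: "(real^'p) measure"
  distD :: "(real^'r) measure"
  trans :: "('l, 'p, 'r) transition list"
  term_locs :: "'l set"

definition msupp :: "('a::metric_space) measure \<Rightarrow> 'a set" where
  "msupp M = {x. \<forall>e>0. emeasure M (ball x e) \<noteq> 0}"

definition product_distribution :: "(real^'r::finite) measure \<Rightarrow> bool" where
  "product_distribution D \<longleftrightarrow>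
     (\<exists>Ds :: 'r \<Rightarrow> real measure.
        (\<forall>i. prob_space (Ds i) \<and> sets (Ds i) = sets borel) \<and>
        D = distr (PiM UNIV Ds) borel (\<lambda>f. \<chi> i. f i))"

definition wpts_wf :: "('l, 'p::finite, 'r::finite, 'x) wpts_scheme \<Rightarrow> bool" where
  "wpts_wf P \<longleftrightarrow>
     finite (locs P) \<and> l_init P \<in> locs P \<and> l_out P \<in> locs P \<and> term_locs P \<subseteq> locs P \<and>
     prob_space (mu_init P) \<and> sets (mu_init P) = sets borel \<and> bounded (msupp (mu_init P)) \<and>
     prob_space (distD P) \<and> sets (distD P) = sets borel \<and> product_distribution (distD P) \<and>
     (\<forall>t \<in> set (trans P).
        t_src t \<in> locs P \<and> t_guard t \<in> sets borel \<and> t_forks t \<noteq> [] \<and>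
        sum_list (map f_prob (t_forks t)) = 1 \<and>
        (\<forall>f \<in> set (t_forks t).
           f_dest f \<in> locs P \<and> 0 < f_prob f \<and> f_prob f \<le> 1 \<and>
           (\<lambda>(v, r). f_upd f v r) \<in> borel_measurable (borel \<Otimes>\<^sub>M borel) \<and>
           (\<lambda>(v, r). f_wt f v r) \<in> borel_measurable (borel \<Otimes>\<^sub>M borel) \<and>
           (\<forall>v r. 0 \<le> f_wt f v r))) \<and>
     (\<forall>l \<in> locs P - term_locs P. \<forall>v.
        \<exists>!t. t \<in> set (trans P) \<and> t_src t = l \<and> v \<in> t_guard t)"

text \<open>The fork of a fork list selected by a uniform sample u in [0,1):
  fork j is chosen iff u lies in [p_0+...+p_{j-1}, p_0+...+p_j), i.e. with probability p_j.\<close>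
definition choose_fork :: "real list \<Rightarrow> real \<Rightarrow> nat" where
  "choose_fork ps u = (LEAST j. u < sum_list (take (Suc j) ps))"

definition enabled_trans ::
  "('l, 'p::finite, 'r::finite, 'x) wpts_scheme \<Rightarrow> 'l \<Rightarrow> real^'p \<Rightarrow> ('l, 'p, 'r) transition" where
  "enabled_trans P l v = (THE t. t \<in> set (trans P) \<and> t_src t = l \<and> v \<in> t_guard t)"

text \<open>Weighted states: (location, valuation, weight).  One step of a run, driven by
  a uniform sample u (fork choice) and a sample r from D.\<close>
definition step ::
  "('l, 'p::finite, 'r::finite, 'x) wpts_scheme \<Rightarrow> 'l \<times> (real^'p) \<times> real \<Rightarrow> real \<times> (real^'r)
     \<Rightarrow> 'l \<times> (real^'p) \<times> real" where
  "step P s ur =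
     (case s of (l, v, w) \<Rightarrow> case ur of (u, r) \<Rightarrow>
        if l \<in> term_locs P then (l, v, w)
        else (let fs = t_forks (enabled_trans P l v);
                  f = fs ! choose_fork (map f_prob fs) u
              in (f_dest f, f_upd f v r, w * f_wt f v r)))"

primrec run ::
  "('l, 'p::finite, 'r::finite, 'x) wpts_scheme \<Rightarrow> 'l \<Rightarrow> real^'p \<Rightarrow> (nat \<Rightarrow> real \<times> (real^'r))
     \<Rightarrow> nat \<Rightarrow> 'l \<times> (real^'p) \<times> real" where
  "run P l v \<omega> 0 = (l, v, 1)"
| "run P l v \<omega> (Suc n) = step P (run P l v \<omega> n) (\<omega> n)"

text \<open>Probability space of the i.i.d. driving sequences: at each step an independent
  uniform sample on [0,1) (fork choice) and an independent sample from D.\<close>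
definition drive_space :: "('l, 'p::finite, 'r::finite, 'x) wpts_scheme \<Rightarrow> (nat \<Rightarrow> real \<times> (real^'r)) measure" where
  "drive_space P = PiM UNIV (\<lambda>_::nat. uniform_measure lborel {0..<1} \<Otimes>\<^sub>M distD P)"

definition terminates :: "('l, 'p::finite, 'r::finite, 'x) wpts_scheme \<Rightarrow> 'l \<Rightarrow> real^'p \<Rightarrow> (nat \<Rightarrow> real \<times> (real^'r)) \<Rightarrow> bool" where
  "terminates P l v \<omega> \<longleftrightarrow> (\<exists>n. fst (run P l v \<omega> n) \<in> term_locs P)"

definition term_time :: "('l, 'p::finite, 'r::finite, 'x) wpts_scheme \<Rightarrow> 'l \<Rightarrow> real^'p \<Rightarrow> (nat \<Rightarrow> real \<times> (real^'r)) \<Rightarrow> nat" where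
  "term_time P l v \<omega> = (LEAST n. fst (run P l v \<omega> n) \<in> term_locs P)"

definition ew :: "('l, 'p::finite, 'r::finite, 'x) wpts_scheme \<Rightarrow> 'l \<Rightarrow> real^'p \<Rightarrow> ennreal" where
  "ew P l v = (\<integral>\<^sup>+ \<omega>. (if terminates P l v \<omega>
        then ennreal (snd (snd (run P l v \<omega> (term_time P l v \<omega>)))) else 0) \<partial>drive_space P)"

text \<open>[[P]]_v(R^|V_p|) = ew(l_init, v).\<close>
definition total_mass :: "('l, 'p::finite, 'r::finite, 'x) wpts_scheme \<Rightarrow> real^'p \<Rightarrow> ennreal" where
  "total_mass P v = ew P (l_init P) v"

inductive reachable :: "('l, 'p::finite, 'r::finite, 'x) wpts_scheme \<Rightarrow> 'l \<Rightarrow> real^'p \<Rightarrow> bool"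
  for P where
  init: "v0 \<in> msupp (mu_init P) \<Longrightarrow> reachable P (l_init P) v0"
| step: "reachable P l v \<Longrightarrow> l \<notin> term_locs P \<Longrightarrow> t = enabled_trans P l v \<Longrightarrow>
         f \<in> set (t_forks t) \<Longrightarrow> reachable P (f_dest f) (f_upd f v r)"

definition score_at_end :: "('l, 'p::finite, 'r::finite, 'x) wpts_scheme \<Rightarrow> bool" where
  "score_at_end P \<longleftrightarrow>
     (\<forall>v \<in> msupp (mu_init P).
        emeasure (drive_space P) {\<omega> \<in> space (drive_space P). terminates P (l_init P) v \<omega>} = 1) \<and>
     (\<exists>!t. t \<in> set (trans P) \<and> (\<exists>f \<in> set (t_forks t). f_dest f = l_out P)) \<and>
     (\<forall>t \<in> set (trans P). (\<exists>f \<in> set (t_forks t). f_dest f = l_out P) \<longrightarrow>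
        (\<exists>wt Mc. t_forks t = [(l_out P, 1, \<lambda>v r. v, wt)] \<and> 0 < Mc \<and>
                 (\<forall>v r. 0 \<le> wt v r \<and> wt v r \<le> Mc))) \<and>
     (\<forall>t \<in> set (trans P). \<forall>f \<in> set (t_forks t). f_dest f \<noteq> l_out P \<longrightarrow>
        f_wt f = (\<lambda>v r. 1))"

definition truncation_fun :: "('p::finite \<Rightarrow> real set) \<Rightarrow> bool" where
  "truncation_fun B \<longleftrightarrow> (\<forall>x. is_interval (B x) \<and> bounded (B x))"

definition PhiB :: "('p::finite \<Rightarrow> real set) \<Rightarrow> real^'p \<Rightarrow> bool" where
  "PhiB B v \<longleftrightarrow> (\<forall>x. v $ x \<in> B x)"

definition lift_fork :: "('l, 'p::finite, 'r::finite) fork \<Rightarrow> ('l option, 'p, 'r) fork" where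
  "lift_fork f = (Some (f_dest f), f_prob f, f_upd f, f_wt f)"

definition sharp_fork ::
  "'l \<Rightarrow> (real^'p \<Rightarrow> real) \<Rightarrow> ('l, 'p::finite, 'r::finite) fork \<Rightarrow> ('l option, 'p, 'r) fork" where
  "sharp_fork lo M f =
     (if f_dest f = lo then lift_fork f else (None, f_prob f, f_upd f, \<lambda>v r. M v))"

text \<open>The truncated WPTS; the fresh location is None, old locations l become Some l.\<close>
definition truncate ::
  "('l, 'p::finite, 'r::finite) wpts \<Rightarrow> ('p \<Rightarrow> real set) \<Rightarrow> (real^'p \<Rightarrow> real) \<Rightarrow> ('l option, 'p, 'r) wpts" where
  "truncate P B M =
     \<lparr> locs = Some ` locs P \<union> {None},
       l_init = Some (l_init P),
       l_out = Some (l_out P),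
       mu_init = mu_init P,
       distD = distD P,
       trans = concat (map (\<lambda>t.
                 [(Some (t_src t), t_guard t \<inter> {v. PhiB B v}, map lift_fork (t_forks t)),
                  (Some (t_src t), t_guard t \<inter> {v. \<not> PhiB B v}, map (sharp_fork (l_out P) M) (t_forks t))])
               (filter (\<lambda>t. t_src t \<noteq> l_out P) (trans P))),
       term_locs = {Some (l_out P), None} \<rparr>"

end

theory Submission
  imports Defs
begin

text \<open>The expected weight collected from a weighted state is the supremum over n of the expected
  weight collected within n steps, and these finite-horizon expectations obey the Bellman
  recursion E_{n+1}(s) = \<integral> E_n(step s x) dx.  Drive \<Pi> and \<Pi>_{B,M} by the same random samples:
  from a reachable state they take the same fork, except at a state violating \<Phi>_B whose enabled
  transition leads away from l_out, where \<Pi>_{B,M} stops in \<sharp> with weight M(v).  There \<Pi> still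
  collects ew(l,v), which the hypothesis compares with M(v); elsewhere the weights agree, because
  scores other than the final one are 1.  Induction on n propagates the comparison along the Bellman
  recursion, and taking the supremum over n yields it for the total masses.\<close>

primrec run_from ::
  "('l, 'p::finite, 'r::finite, 'x) wpts_scheme \<Rightarrow> 'l \<times> (real^'p) \<times> real \<Rightarrow> (nat \<Rightarrow> real \<times> (real^'r))
     \<Rightarrow> nat \<Rightarrow> 'l \<times> (real^'p) \<times> real" where
  "run_from Q s \<omega> 0 = s"
| "run_from Q s \<omega> (Suc n) = step Q (run_from Q s \<omega> n) (\<omega> n)"

lemma run_eq_run_from: "run Q l v \<omega> n = run_from Q (l, v, 1) \<omega> n"
  by (induction n) auto

lemma run_from_Suc_shift:
  "run_from Q s \<omega> (Suc n) = run_from Q (step Q s (\<omega> 0)) (\<lambda>k. \<omega> (Suc k)) n"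
  by (induction n arbitrary: s) auto

lemma step_term: "fst s \<in> term_locs Q \<Longrightarrow> step Q s x = s"
  by (cases s; cases x) (auto simp: step_def)

lemma run_from_stays_term:
  "fst (run_from Q s \<omega> n) \<in> term_locs Q \<Longrightarrow> run_from Q s \<omega> (n + k) = run_from Q s \<omega> n"
  by (induction k) (auto simp: step_term)

lemma run_from_term: "fst s \<in> term_locs Q \<Longrightarrow> run_from Q s \<omega> n = s"
  using run_from_stays_term[of Q s \<omega> 0 n] by simp

definition final_weight :: "('l, 'p::finite, 'r::finite, 'x) wpts_scheme \<Rightarrow> 'l \<times> (real^'p) \<times> real \<Rightarrow> ennreal" where
  "final_weight Q s = (if fst s \<in> term_locs Q then ennreal (snd (snd s)) else 0)"

lemma final_weight_run_from_mono:
  assumes "m \<le> n"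
  shows "final_weight Q (run_from Q s \<omega> m) \<le> final_weight Q (run_from Q s \<omega> n)"
proof (cases "fst (run_from Q s \<omega> m) \<in> term_locs Q")
  case True
  obtain k where "n = m + k" using assms le_Suc_ex by blast
  thus ?thesis using run_from_stays_term[OF True, of k] by simp
qed (simp add: final_weight_def)

lemma SUP_final_weight_run_from:
  "(SUP n. final_weight Q (run_from Q (l, v, 1) \<omega> n)) =
   (if terminates Q l v \<omega> then ennreal (snd (snd (run Q l v \<omega> (term_time Q l v \<omega>)))) else 0)"
proof (cases "terminates Q l v \<omega>")
  case True
  let ?T = "term_time Q l v \<omega>" and ?F = "\<lambda>n. final_weight Q (run_from Q (l, v, 1) \<omega> n)"
  have T: "fst (run_from Q (l, v, 1) \<omega> ?T) \<in> term_locs Q"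
    using True unfolding terminates_def term_time_def run_eq_run_from by (metis LeastI)
  have before_T: "n < ?T \<Longrightarrow> fst (run_from Q (l, v, 1) \<omega> n) \<notin> term_locs Q" for n
    unfolding term_time_def run_eq_run_from using not_less_Least by blast
  have "?F n \<le> ?F ?T" for n
  proof (cases "n < ?T")
    case False
    then obtain k where "n = ?T + k" using le_Suc_ex not_less by blast
    thus ?thesis using run_from_stays_term[OF T, of k] by simp
  qed (simp add: before_T final_weight_def)
  hence "(SUP n. ?F n) = ?F ?T" by (intro antisym SUP_least SUP_upper) auto
  thus ?thesis using True T by (simp add: final_weight_def run_eq_run_from)
next
  case False
  hence "fst (run_from Q (l, v, 1) \<omega> n) \<notin> term_locs Q" for n
    unfolding terminates_def run_eq_run_from by blast
  thus ?thesis using False by (simp add: final_weight_def)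
qed

text \<open>\<open>choose_fork\<close> returns a junk index for samples outside [0,1).  Runs are therefore
  analysed along the clamped driving sequence, which agrees with the original one almost surely
  (\<open>AE_clamp\<close>), so that every step follows a fork of the enabled transition.\<close>

definition clamp_choice :: "real \<times> 'b \<Rightarrow> real \<times> 'b" where
  "clamp_choice x = (if fst x \<in> {0..<1} then fst x else 0, snd x)"

lemma fst_clamp_choice: "fst (clamp_choice x) \<in> {0..<1}"
  by (simp add: clamp_choice_def)

lemma measurable_clamp_choice[measurable]: "clamp_choice \<in> measurable (borel \<Otimes>\<^sub>M M) (borel \<Otimes>\<^sub>M M)"
  unfolding clamp_choice_def by measurable

lemma choose_fork_less_length:
  assumes "sum_list ps = 1" "u < 1"
  shows "choose_fork ps u < length ps"
proof -
  have ne: "ps \<noteq> []" using assms(1) by auto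
  have "u < sum_list (take (Suc (length ps - 1)) ps)" using assms ne by simp
  hence "choose_fork ps u \<le> length ps - 1" unfolding choose_fork_def by (rule Least_le)
  thus ?thesis using ne by (cases ps) auto
qed

lemma measurable_choose_fork: "choose_fork ps \<in> measurable borel (count_space UNIV)"
  unfolding choose_fork_def by measurable

lemma enabled_trans_eq:
  assumes "wpts_wf Q" "l \<in> locs Q - term_locs Q" "t \<in> set (trans Q)" "t_src t = l" "v \<in> t_guard t"
  shows "enabled_trans Q l v = t"
proof -
  have "\<exists>!t. t \<in> set (trans Q) \<and> t_src t = l \<and> v \<in> t_guard t"
    using assms(1,2) unfolding wpts_wf_def by blast
  thus ?thesis unfolding enabled_trans_def by (rule the1_equality) (use assms in auto)
qed

lemma enabled_trans:
  assumes "wpts_wf Q" "l \<in> locs Q - term_locs Q"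
  shows "enabled_trans Q l v \<in> set (trans Q)" "t_src (enabled_trans Q l v) = l"
    "v \<in> t_guard (enabled_trans Q l v)"
proof -
  obtain t where "t \<in> set (trans Q)" "t_src t = l" "v \<in> t_guard t"
    using assms unfolding wpts_wf_def by blast
  thus "enabled_trans Q l v \<in> set (trans Q)" "t_src (enabled_trans Q l v) = l"
    "v \<in> t_guard (enabled_trans Q l v)"
    using enabled_trans_eq[OF assms] by auto
qed

lemma choose_fork_clamp_less_length:
  assumes "wpts_wf Q" "t \<in> set (trans Q)"
  shows "choose_fork (map f_prob (t_forks t)) (fst (clamp_choice x)) < length (t_forks t)"
proof -
  have sum1: "sum_list (map f_prob (t_forks t)) = 1" using assms by (auto simp: wpts_wf_def)
  show ?thesis using choose_fork_less_length[OF sum1, of "fst (clamp_choice x)"] fst_clamp_choice[of x]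
    by simp
qed

lemma step_clamp_nonterm:
  assumes "l \<notin> term_locs Q"
  shows "step Q (l, v, w) (clamp_choice x) =
    (let fs = t_forks (enabled_trans Q l v); f = fs ! choose_fork (map f_prob fs) (fst (clamp_choice x))
     in (f_dest f, f_upd f v (snd x), w * f_wt f v (snd x)))"
  using assms by (cases x) (simp add: step_def clamp_choice_def Let_def)

text \<open>This form exposes the measurable dependence of a step on the valuation and the sample.\<close>

lemma step_clamp_as_sum:
  fixes g :: "'l \<times> (real^'p::finite) \<times> real \<Rightarrow> ennreal" and Q :: "('l, 'p, 'r::finite, 'x) wpts_scheme"
  assumes wf: "wpts_wf Q" and l: "l \<in> locs Q - term_locs Q"
  shows "g (step Q (l, v, w) (clamp_choice x)) =
    (\<Sum>t\<in>{t \<in> set (trans Q). t_src t = l}. \<Sum>j<length (t_forks t).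
       indicator (t_guard t) v * indicator {y. choose_fork (map f_prob (t_forks t)) (fst (clamp_choice y)) = j} x *
       g (f_dest (t_forks t ! j), f_upd (t_forks t ! j) v (snd x), w * f_wt (t_forks t ! j) v (snd x)))"
    (is "_ = (\<Sum>t\<in>?TS. ?S t)")
proof -
  define t0 where "t0 = enabled_trans Q l v"
  define j0 where "j0 = choose_fork (map f_prob (t_forks t0)) (fst (clamp_choice x))"
  have t0: "t0 \<in> ?TS" "v \<in> t_guard t0" using enabled_trans[OF wf l, of v] by (auto simp: t0_def)
  have j0: "j0 < length (t_forks t0)"
    unfolding j0_def using t0 by (intro choose_fork_clamp_less_length[OF wf]) simp
  have "?S t = 0" if "t \<in> ?TS - {t0}" for t
  proof -
    have "v \<notin> t_guard t" using that enabled_trans_eq[OF wf l, of t v] by (auto simp: t0_def)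
    thus ?thesis by simp
  qed
  hence "(\<Sum>t\<in>?TS. ?S t) = ?S t0" using t0 by (subst sum.remove[of _ t0]) auto
  also have "\<dots> = g (f_dest (t_forks t0 ! j0), f_upd (t_forks t0 ! j0) v (snd x),
                     w * f_wt (t_forks t0 ! j0) v (snd x))"
    using j0 t0 by (subst sum.remove[of _ j0]) (auto simp: j0_def intro!: sum.neutral)
  also have "\<dots> = g (step Q (l, v, w) (clamp_choice x))"
    using l by (simp add: step_clamp_nonterm Let_def t0_def j0_def)
  finally show ?thesis by simp
qed

abbreviation borel_drives :: "(nat \<Rightarrow> real \<times> (real^'r::finite)) measure" where
  "borel_drives \<equiv> PiM UNIV (\<lambda>_. borel \<Otimes>\<^sub>M borel)"

lemma borel_measurable_comp2:
  assumes "(\<lambda>(v, r). g v r) \<in> borel_measurable (borel \<Otimes>\<^sub>M borel)"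
    and "a \<in> borel_measurable M" "b \<in> borel_measurable M"
  shows "(\<lambda>x. g (a x) (b x)) \<in> borel_measurable M"
  using measurable_compose[OF measurable_Pair[OF assms(2,3)] assms(1)] by simp

lemma sets_choose_fork_clamp_choice:
  "{y :: real \<times> (real^'r::finite). choose_fork ps (fst (clamp_choice y)) = j} \<in> sets (borel \<Otimes>\<^sub>M borel)"
proof -
  have "(\<lambda>y :: real \<times> (real^'r). choose_fork ps (fst (clamp_choice y)))
          \<in> measurable (borel \<Otimes>\<^sub>M borel) (count_space UNIV)"
    by (rule measurable_compose[OF _ measurable_choose_fork]) measurable
  hence "{y \<in> space (borel \<Otimes>\<^sub>M borel). choose_fork ps (fst (clamp_choice y)) = j}
           \<in> sets (borel \<Otimes>\<^sub>M (borel :: (real^'r) measure))"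
    by measurable
  thus ?thesis by (simp add: space_pair_measure)
qed

lemma measurable_after_fork:
  fixes G :: "(real^'p::finite) \<times> real \<times> (nat \<Rightarrow> real \<times> (real^'r::finite)) \<Rightarrow> ennreal"
  assumes upd: "(\<lambda>(v, r). upd v r) \<in> borel_measurable (borel \<Otimes>\<^sub>M borel)"
    and wt: "(\<lambda>(v, r). wt v r) \<in> borel_measurable (borel \<Otimes>\<^sub>M borel)"
    and G: "G \<in> borel_measurable (borel \<Otimes>\<^sub>M borel \<Otimes>\<^sub>M borel_drives)"
  shows "(\<lambda>(v, w, \<omega>). G (upd v (snd (\<omega> 0)), w * wt v (snd (\<omega> 0)), \<lambda>k. \<omega> (Suc k)))
           \<in> borel_measurable (borel \<Otimes>\<^sub>M borel \<Otimes>\<^sub>M borel_drives)"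
proof -
  have shift: "(\<lambda>x. \<lambda>k. snd (snd x) (Suc k))
      \<in> measurable (borel \<Otimes>\<^sub>M borel \<Otimes>\<^sub>M borel_drives) (borel_drives :: (nat \<Rightarrow> real \<times> (real^'r)) measure)"
    by (rule measurable_PiM_single') (measurable, auto simp: space_pair_measure space_PiM)
  show ?thesis
    unfolding split_beta' using G
    by (rule measurable_compose[rotated])
       (intro measurable_Pair borel_measurable_times shift
          borel_measurable_comp2[OF upd] borel_measurable_comp2[OF wt]; measurable)
qed

text \<open>The location is kept fixed and outside the measurable argument; the induction step
  recovers the dependence on the next location through \<open>step_clamp_as_sum\<close>.\<close>

lemma measurable_final_weight_run_from:
  fixes Q :: "('l, 'p::finite, 'r::finite, 'x) wpts_scheme"
  assumes wf: "wpts_wf Q"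
  shows "l \<in> locs Q \<Longrightarrow> (\<lambda>(v, w, \<omega>). final_weight Q (run_from Q (l, v, w) (clamp_choice \<circ> \<omega>) n))
           \<in> borel_measurable (borel \<Otimes>\<^sub>M borel \<Otimes>\<^sub>M (borel_drives :: (nat \<Rightarrow> real \<times> (real^'r)) measure))"
proof (induction n arbitrary: l)
  case 0
  show ?case by (cases "l \<in> term_locs Q"; simp add: final_weight_def split_beta'; measurable)
next
  case (Suc n l)
  show ?case
  proof (cases "l \<in> term_locs Q")
    case True
    thus ?thesis by (simp add: run_from_term final_weight_def split_beta' del: run_from.simps; measurable)
  next
    case False
    hence l: "l \<in> locs Q - term_locs Q" using Suc.prems by auto
    let ?N = "borel \<Otimes>\<^sub>M borel \<Otimes>\<^sub>M (borel_drives :: (nat \<Rightarrow> real \<times> (real^'r)) measure)"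
    define G where "G l' = (\<lambda>(v, w, \<omega>). final_weight Q (run_from Q (l', v, w) (clamp_choice \<circ> \<omega>) n))" for l'
    define H where "H = (\<lambda>(v, w, \<omega>). \<Sum>t\<in>{t \<in> set (trans Q). t_src t = l}. \<Sum>j<length (t_forks t).
        indicator (t_guard t) v *
        indicator {y. choose_fork (map f_prob (t_forks t)) (fst (clamp_choice y)) = j} (\<omega> 0) *
        G (f_dest (t_forks t ! j)) (f_upd (t_forks t ! j) v (snd (\<omega> 0)),
            w * f_wt (t_forks t ! j) v (snd (\<omega> 0)), \<lambda>k. \<omega> (Suc k)))"
    have "final_weight Q (run_from Q (l, v, w) (clamp_choice \<circ> \<omega>) (Suc n)) = H (v, w, \<omega>)" for v w \<omega>
      unfolding H_def G_def run_from_Suc_shift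
      using step_clamp_as_sum[OF wf l,
          where g = "\<lambda>s. final_weight Q (run_from Q s (\<lambda>k. clamp_choice (\<omega> (Suc k))) n)"]
      by (simp add: comp_def)
    hence "(\<lambda>(v, w, \<omega>). final_weight Q (run_from Q (l, v, w) (clamp_choice \<circ> \<omega>) (Suc n))) = H"
      by auto
    moreover have "H \<in> borel_measurable ?N"
      unfolding H_def split_beta'
    proof (intro borel_measurable_sum borel_measurable_times_ennreal)
      fix t j assume t: "t \<in> {t \<in> set (trans Q). t_src t = l}" and j: "j \<in> {..<length (t_forks t)}"
      let ?f = "t_forks t ! j"
      have [measurable]: "t_guard t \<in> sets borel"
        and upd: "(\<lambda>(v, r). f_upd ?f v r) \<in> borel_measurable (borel \<Otimes>\<^sub>M borel)"
        and wt: "(\<lambda>(v, r). f_wt ?f v r) \<in> borel_measurable (borel \<Otimes>\<^sub>M borel)"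
        and dest: "f_dest ?f \<in> locs Q"
        using t j wf nth_mem[of j "t_forks t"] by (auto simp: wpts_wf_def)
      note [measurable] = sets_choose_fork_clamp_choice[where 'r='r, of "map f_prob (t_forks t)" j]
      show "(\<lambda>x. indicator (t_guard t) (fst x) :: ennreal) \<in> borel_measurable ?N"
        and "(\<lambda>x. indicator {y. choose_fork (map f_prob (t_forks t)) (fst (clamp_choice y)) = j}
                (snd (snd x) 0) :: ennreal) \<in> borel_measurable ?N"
        by measurable
      show "(\<lambda>x. G (f_dest ?f) (f_upd ?f (fst x) (snd (snd (snd x) 0)),
              fst (snd x) * f_wt ?f (fst x) (snd (snd (snd x) 0)), \<lambda>k. snd (snd x) (Suc k)))
            \<in> borel_measurable ?N"
        using measurable_after_fork[OF upd wt Suc.IH[OF dest, folded G_def]] by (simp add: split_beta')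
    qed
    ultimately show ?thesis by (simp only:)
  qed
qed

section \<open>Expected weights and the Bellman recursion\<close>

definition drive_step :: "('l, 'p::finite, 'r::finite, 'x) wpts_scheme \<Rightarrow> (real \<times> (real^'r)) measure" where
  "drive_step Q = uniform_measure lborel {0..<1} \<Otimes>\<^sub>M distD Q"

definition ew_within :: "('l, 'p::finite, 'r::finite, 'x) wpts_scheme \<Rightarrow> nat \<Rightarrow> 'l \<times> (real^'p) \<times> real \<Rightarrow> ennreal" where
  "ew_within Q n s = (\<integral>\<^sup>+\<omega>. final_weight Q (run_from Q s (clamp_choice \<circ> \<omega>) n) \<partial>drive_space Q)"

definition ew_from :: "('l, 'p::finite, 'r::finite, 'x) wpts_scheme \<Rightarrow> 'l \<times> (real^'p) \<times> real \<Rightarrow> ennreal" where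
  "ew_from Q s = (SUP n. ew_within Q n s)"

lemma drive_space_eq_PiM: "drive_space Q = PiM UNIV (\<lambda>_. drive_step Q)"
  by (simp add: drive_space_def drive_step_def)

lemma prob_space_drive_step: "wpts_wf Q \<Longrightarrow> prob_space (drive_step Q)"
  unfolding drive_step_def wpts_wf_def by (intro prob_space_pair prob_space_uniform_measure) auto

lemma sequence_space_drive_step: "wpts_wf Q \<Longrightarrow> sequence_space (drive_step Q)"
  unfolding sequence_space_def product_prob_space_def product_prob_space_axioms_def product_sigma_finite_def
  using prob_space_drive_step by (auto intro: prob_space_imp_sigma_finite)

lemma prob_space_drive_space:
  assumes "wpts_wf Q"
  shows "prob_space (drive_space Q)"
proof -
  interpret sequence_space "drive_step Q" using sequence_space_drive_step[OF assms] .
  show ?thesis unfolding drive_space_eq_PiM by (rule prob_space_PiM) (rule M.prob_space_axioms)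
qed

lemma sets_drive_space: "wpts_wf Q \<Longrightarrow> sets (drive_space Q) = sets borel_drives"
  unfolding drive_space_eq_PiM drive_step_def wpts_wf_def
  by (intro sets_PiM_cong sets_pair_measure_cong) auto

lemma measurable_final_weight_run_from_drive_space:
  fixes Q :: "('l, 'p::finite, 'r::finite, 'x) wpts_scheme"
  assumes wf: "wpts_wf Q" and l: "l \<in> locs Q"
  shows "(\<lambda>\<omega>. final_weight Q (run_from Q (l, v, w) (clamp_choice \<circ> \<omega>) n)) \<in> borel_measurable (drive_space Q)"
proof -
  have "(\<lambda>\<omega>. final_weight Q (run_from Q (l, v, w) (clamp_choice \<circ> \<omega>) n))
          \<in> borel_measurable (borel_drives :: (nat \<Rightarrow> real \<times> (real^'r)) measure)"
    using measurable_compose[OF _ measurable_final_weight_run_from[OF wf l, of n], of "\<lambda>\<omega>. (v, w, \<omega>)"]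
    by simp
  thus ?thesis using measurable_cong_sets[OF sets_drive_space[OF wf, symmetric] refl] by blast
qed

lemma ew_within_mono: "ew_within Q n s \<le> ew_within Q (Suc n) s"
  unfolding ew_within_def by (intro nn_integral_mono final_weight_run_from_mono) simp

lemma ew_within_le_ew_from: "ew_within Q n s \<le> ew_from Q s"
  unfolding ew_from_def by (rule SUP_upper) simp

lemma ew_within_0: "wpts_wf Q \<Longrightarrow> ew_within Q 0 s = final_weight Q s"
  by (simp add: ew_within_def prob_space.emeasure_space_1[OF prob_space_drive_space])

lemma ew_within_term: "wpts_wf Q \<Longrightarrow> fst s \<in> term_locs Q \<Longrightarrow> ew_within Q n s = final_weight Q s"
  by (simp add: ew_within_def run_from_term prob_space.emeasure_space_1[OF prob_space_drive_space])

lemma ew_from_term: "wpts_wf Q \<Longrightarrow> fst s \<in> term_locs Q \<Longrightarrow> ew_from Q s = final_weight Q s"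
  by (simp add: ew_from_def ew_within_term)

text \<open>Fubini, after splitting a driving sequence into its first sample and the rest.\<close>

lemma ew_within_Suc:
  fixes Q :: "('l, 'p::finite, 'r::finite, 'x) wpts_scheme"
  assumes wf: "wpts_wf Q" and l: "l \<in> locs Q"
  shows "ew_within Q (Suc n) (l, v, w) = (\<integral>\<^sup>+x. ew_within Q n (step Q (l, v, w) (clamp_choice x)) \<partial>drive_step Q)"
    and "(\<lambda>x. ew_within Q n (step Q (l, v, w) (clamp_choice x))) \<in> borel_measurable (drive_step Q)"
proof -
  interpret sequence_space "drive_step Q" using sequence_space_drive_step[OF wf] .
  define f where "f \<omega> = final_weight Q (run_from Q (l, v, w) (clamp_choice \<circ> \<omega>) (Suc n))" for \<omega>
  have fm: "f \<in> borel_measurable S"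
    using measurable_final_weight_run_from_drive_space[OF wf l, of v w "Suc n"]
    unfolding f_def drive_space_eq_PiM by (simp del: run_from.simps)
  have cons: "(\<lambda>(x, \<omega>). case_nat x \<omega>) \<in> measurable (drive_step Q \<Otimes>\<^sub>M S) S" by measurable
  have fcons: "(\<lambda>z. f (case_prod case_nat z)) \<in> borel_measurable (drive_step Q \<Otimes>\<^sub>M S)"
    using measurable_compose[OF cons fm] by (simp add: split_beta')
  have inner: "(\<integral>\<^sup>+\<omega>. f (case_nat x \<omega>) \<partial>S) = ew_within Q n (step Q (l, v, w) (clamp_choice x))" for x
    unfolding ew_within_def drive_space_eq_PiM f_def run_from_Suc_shift by (simp add: comp_def)
  have "ew_within Q (Suc n) (l, v, w) = integral\<^sup>N (distr (drive_step Q \<Otimes>\<^sub>M S) S (\<lambda>(x, \<omega>). case_nat x \<omega>)) f"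
    unfolding ew_within_def f_def drive_space_eq_PiM using PiM_iter by simp
  also have "\<dots> = (\<integral>\<^sup>+z. f (case_prod case_nat z) \<partial>(drive_step Q \<Otimes>\<^sub>M S))"
    by (rule nn_integral_distr[OF cons]) (use fm PiM_iter in simp)
  also have "\<dots> = (\<integral>\<^sup>+x. \<integral>\<^sup>+\<omega>. f (case_nat x \<omega>) \<partial>S \<partial>drive_step Q)"
    using P.nn_integral_fst[OF fcons] by simp
  finally show "ew_within Q (Suc n) (l, v, w) = (\<integral>\<^sup>+x. ew_within Q n (step Q (l, v, w) (clamp_choice x)) \<partial>drive_step Q)"
    using inner by simp
  show "(\<lambda>x. ew_within Q n (step Q (l, v, w) (clamp_choice x))) \<in> borel_measurable (drive_step Q)"
    using P.borel_measurable_nn_integral_fst[OF fcons] inner by simp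
qed

lemma ew_from_step:
  fixes Q :: "('l, 'p::finite, 'r::finite, 'x) wpts_scheme"
  assumes wf: "wpts_wf Q" and l: "l \<in> locs Q"
  shows "ew_from Q (l, v, w) = (\<integral>\<^sup>+x. ew_from Q (step Q (l, v, w) (clamp_choice x)) \<partial>drive_step Q)"
proof -
  have "ew_from Q (l, v, w) = (SUP n. ew_within Q (Suc n) (l, v, w))"
    unfolding ew_from_def by (intro antisym SUP_mono) (blast intro: ew_within_mono order_refl)+
  also have "\<dots> = (SUP n. \<integral>\<^sup>+x. ew_within Q n (step Q (l, v, w) (clamp_choice x)) \<partial>drive_step Q)"
    using ew_within_Suc(1)[OF wf l] by simp
  also have "\<dots> = (\<integral>\<^sup>+x. (SUP n. ew_within Q n (step Q (l, v, w) (clamp_choice x))) \<partial>drive_step Q)"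
    by (rule nn_integral_monotone_convergence_SUP[symmetric])
       (auto simp: incseq_def le_fun_def intro: incseq_SucI[THEN incseqD] ew_within_mono ew_within_Suc(2)[OF wf l])
  finally show ?thesis by (simp add: ew_from_def)
qed

lemma AE_clamp:
  assumes wf: "wpts_wf Q"
  shows "AE \<omega> in drive_space Q. clamp_choice \<circ> \<omega> = \<omega>"
proof -
  interpret sequence_space "drive_step Q" using sequence_space_drive_step[OF wf] .
  interpret U: prob_space "uniform_measure lborel {0..<1::real}"
    by (rule prob_space_uniform_measure) auto
  interpret D: prob_space "distD Q" using wf by (simp add: wpts_wf_def)
  interpret UD: pair_sigma_finite "uniform_measure lborel {0..<1::real}" "distD Q" ..
  have "AE x in drive_step Q. fst x \<in> {0..<1}"
    unfolding drive_step_def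
    by (rule UD.AE_pair_measure) (measurable, auto intro: AE_uniform_measureI)
  hence "AE \<omega> in S. fst (\<omega> n) \<in> {0..<1}" for n
    using AE_component[of n "\<lambda>x. fst x \<in> {0..<1}"] by simp
  hence "AE \<omega> in S. \<forall>n. fst (\<omega> n) \<in> {0..<1}" by (simp add: AE_all_countable)
  thus ?thesis unfolding drive_space_eq_PiM
    by eventually_elim (auto simp: clamp_choice_def fun_eq_iff)
qed

lemma ew_eq_ew_from:
  assumes wf: "wpts_wf Q" and l: "l \<in> locs Q"
  shows "ew Q l v = ew_from Q (l, v, 1)"
proof -
  have "ew Q l v = (\<integral>\<^sup>+\<omega>. (SUP n. final_weight Q (run_from Q (l, v, 1) \<omega> n)) \<partial>drive_space Q)"
    unfolding ew_def SUP_final_weight_run_from ..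
  also have "\<dots> = (\<integral>\<^sup>+\<omega>. (SUP n. final_weight Q (run_from Q (l, v, 1) (clamp_choice \<circ> \<omega>) n)) \<partial>drive_space Q)"
    by (rule nn_integral_cong_AE) (use AE_clamp[OF wf] in \<open>eventually_elim, simp\<close>)
  also have "\<dots> = (SUP n. ew_within Q n (l, v, 1))"
    unfolding ew_within_def
    by (rule nn_integral_monotone_convergence_SUP)
       (auto simp: incseq_def le_fun_def final_weight_run_from_mono
             intro: measurable_final_weight_run_from_drive_space[OF wf l])
  finally show ?thesis by (simp add: ew_from_def)
qed

lemma total_mass_eq_ew_from: "wpts_wf Q \<Longrightarrow> total_mass Q v = ew_from Q (l_init Q, v, 1)"
  unfolding total_mass_def by (rule ew_eq_ew_from) (simp_all add: wpts_wf_def)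

section \<open>Comparison of expected weights along a coupling\<close>

lemma ew_from_le_by_coupling:
  fixes Q1 :: "('l1, 'p::finite, 'r::finite, 'x1) wpts_scheme"
    and Q2 :: "('l2, 'p, 'r, 'x2) wpts_scheme"
  assumes wf1: "wpts_wf Q1" and wf2: "wpts_wf Q2" and distD: "distD Q1 = distD Q2"
    and locs: "\<And>s1 s2. R s1 s2 \<Longrightarrow> fst s1 \<in> locs Q1 \<and> fst s2 \<in> locs Q2"
    and coupled: "\<And>s1 s2. R s1 s2 \<Longrightarrow> ew_from Q1 s1 \<le> ew_from Q2 s2 \<or>
       fst s1 \<notin> term_locs Q1 \<and> (\<forall>x. R (step Q1 s1 (clamp_choice x)) (step Q2 s2 (clamp_choice x)))"
    and "R s1 s2"
  shows "ew_from Q1 s1 \<le> ew_from Q2 s2"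
proof -
  have "ew_within Q1 n s1 \<le> ew_from Q2 s2" if "R s1 s2" for n s1 s2
    using that
  proof (induction n arbitrary: s1 s2)
    case 0
    show ?case
      using coupled[OF 0] ew_within_le_ew_from[of Q1 0 s1] ew_within_0[OF wf1, of s1]
      by (auto simp: final_weight_def)
  next
    case (Suc n)
    obtain l1 v1 w1 where s1: "s1 = (l1, v1, w1)" by (cases s1)
    obtain l2 v2 w2 where s2: "s2 = (l2, v2, w2)" by (cases s2)
    from coupled[OF Suc.prems] show ?case
    proof
      assume "ew_from Q1 s1 \<le> ew_from Q2 s2"
      thus ?case using ew_within_le_ew_from order_trans by blast
    next
      assume "fst s1 \<notin> term_locs Q1 \<and> (\<forall>x. R (step Q1 s1 (clamp_choice x)) (step Q2 s2 (clamp_choice x)))"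
      hence step_le: "ew_within Q1 n (step Q1 s1 (clamp_choice x)) \<le> ew_from Q2 (step Q2 s2 (clamp_choice x))" for x
        using Suc.IH by blast
      have "ew_within Q1 (Suc n) s1 = (\<integral>\<^sup>+x. ew_within Q1 n (step Q1 s1 (clamp_choice x)) \<partial>drive_step Q1)"
        using ew_within_Suc(1)[OF wf1] locs[OF Suc.prems] by (simp add: s1)
      also have "\<dots> \<le> (\<integral>\<^sup>+x. ew_from Q2 (step Q2 s2 (clamp_choice x)) \<partial>drive_step Q2)"
        using step_le distD by (simp add: drive_step_def nn_integral_mono)
      also have "\<dots> = ew_from Q2 s2"
        using ew_from_step[OF wf2] locs[OF Suc.prems] by (simp add: s2)
      finally show ?case .
    qed
  qed
  thus ?thesis unfolding ew_from_def[of Q1] using \<open>R s1 s2\<close> by (blast intro: SUP_least)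
qed

lemma lift_fork_simps[simp]:
  "f_dest (lift_fork f) = Some (f_dest f)" "f_prob (lift_fork f) = f_prob f"
  "f_upd (lift_fork f) = f_upd f" "f_wt (lift_fork f) = f_wt f"
  by (simp_all add: lift_fork_def f_dest_def f_prob_def f_upd_def f_wt_def)

lemma sharp_fork_simps[simp]:
  "f_prob (sharp_fork lo M f) = f_prob f" "f_upd (sharp_fork lo M f) = f_upd f"
  "f_dest (sharp_fork lo M f) = (if f_dest f = lo then Some (f_dest f) else None)"
  "f_wt (sharp_fork lo M f) = (if f_dest f = lo then f_wt f else (\<lambda>v r. M v))"
  by (simp_all add: sharp_fork_def lift_fork_def f_dest_def f_prob_def f_upd_def f_wt_def)

lemma transition_simps[simp]:
  "t_src (l, g, fs) = l" "t_guard (l, g, fs) = g" "t_forks (l, g, fs) = fs"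
  by (simp_all add: t_src_def t_guard_def t_forks_def)

definition inside_trans ::
  "('p::finite \<Rightarrow> real set) \<Rightarrow> ('l, 'p, 'r::finite) transition \<Rightarrow> ('l option, 'p, 'r) transition" where
  "inside_trans B t = (Some (t_src t), t_guard t \<inter> {v. PhiB B v}, map lift_fork (t_forks t))"

definition escape_trans ::
  "('p::finite \<Rightarrow> real set) \<Rightarrow> 'l \<Rightarrow> (real^'p \<Rightarrow> real) \<Rightarrow> ('l, 'p, 'r::finite) transition
     \<Rightarrow> ('l option, 'p, 'r) transition" where
  "escape_trans B lo M t = (Some (t_src t), t_guard t \<inter> {v. \<not> PhiB B v}, map (sharp_fork lo M) (t_forks t))"

lemma inside_escape_trans_simps[simp]:
  "t_src (inside_trans B t) = Some (t_src t)"
  "t_guard (inside_trans B t) = t_guard t \<inter> {v. PhiB B v}"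
  "t_forks (inside_trans B t) = map lift_fork (t_forks t)"
  "t_src (escape_trans B lo M t) = Some (t_src t)"
  "t_guard (escape_trans B lo M t) = t_guard t \<inter> {v. \<not> PhiB B v}"
  "t_forks (escape_trans B lo M t) = map (sharp_fork lo M) (t_forks t)"
  by (simp_all add: inside_trans_def escape_trans_def)

lemma set_trans_truncate:
  "set (trans (truncate P B M)) =
     (\<Union>t\<in>{t \<in> set (trans P). t_src t \<noteq> l_out P}. {inside_trans B t, escape_trans B (l_out P) M t})"
  by (auto simp: truncate_def inside_trans_def escape_trans_def)

lemma truncate_simps[simp]:
  "locs (truncate P B M) = Some ` locs P \<union> {None}"
  "l_init (truncate P B M) = Some (l_init P)"
  "l_out (truncate P B M) = Some (l_out P)"
  "mu_init (truncate P B M) = mu_init P"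
  "distD (truncate P B M) = distD P"
  "term_locs (truncate P B M) = {Some (l_out P), None}"
  by (simp_all add: truncate_def)

lemma sets_PhiB:
  assumes "truncation_fun B"
  shows "{v :: real^'p::finite. PhiB B v} \<in> sets borel"
proof -
  have [measurable]: "B x \<in> sets borel" for x
    using assms by (auto simp: truncation_fun_def intro: real_interval_borel_measurable)
  have "{v :: real^'p. PhiB B v} = {v \<in> space borel. \<forall>x. v $ x \<in> B x}" by (simp add: PhiB_def)
  also have "\<dots> \<in> sets borel" by measurable
  finally show ?thesis .
qed

lemma reachable_in_locs:
  assumes wf: "wpts_wf P"
  shows "reachable P l v \<Longrightarrow> l \<in> locs P"
proof (induction rule: reachable.induct)
  case (init v0) thus ?case using wf by (simp add: wpts_wf_def)
next
  case (step l v t f r)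
  hence "t \<in> set (trans P)" using enabled_trans(1)[OF wf] by blast
  thus ?case using step wf unfolding wpts_wf_def by blast
qed

lemma score_at_end_forks_not_out:
  assumes "score_at_end P" "t \<in> set (trans P)" "\<exists>f \<in> set (t_forks t). f_dest f \<noteq> l_out P"
    and "f \<in> set (t_forks t)"
  shows "f_dest f \<noteq> l_out P"
proof
  assume "f_dest f = l_out P"
  then obtain wt where "t_forks t = [(l_out P, 1, \<lambda>v r. v, wt)]"
    using assms unfolding score_at_end_def by blast
  thus False using assms(3) by (simp add: f_dest_def)
qed

lemma score_at_end_wt:
  "score_at_end P \<Longrightarrow> t \<in> set (trans P) \<Longrightarrow> f \<in> set (t_forks t) \<Longrightarrow> f_dest f \<noteq> l_out P
     \<Longrightarrow> f_wt f = (\<lambda>v r. 1)"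
  unfolding score_at_end_def by blast

locale truncation =
  fixes P :: "('l, 'p::finite, 'r::finite) wpts"
    and B :: "'p \<Rightarrow> real set"
    and M :: "real^'p \<Rightarrow> real"
  assumes wf: "wpts_wf P"
    and term_out: "term_locs P = {l_out P}"
    and sae: "score_at_end P"
    and B: "truncation_fun B"
    and M_nonneg: "\<forall>v. 0 \<le> M v"
    and M_meas: "M \<in> borel_measurable borel"
begin

abbreviation PiBM :: "('l option, 'p, 'r) wpts" where
  "PiBM \<equiv> truncate P B M"

lemma truncate_transitions_wf:
  assumes "t' \<in> set (trans PiBM)"
  shows "t_src t' \<in> locs PiBM \<and> t_guard t' \<in> sets borel \<and> t_forks t' \<noteq> [] \<and>
    sum_list (map f_prob (t_forks t')) = 1 \<and>
    (\<forall>f \<in> set (t_forks t').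
       f_dest f \<in> locs PiBM \<and> 0 < f_prob f \<and> f_prob f \<le> 1 \<and>
       (\<lambda>(v, r). f_upd f v r) \<in> borel_measurable (borel \<Otimes>\<^sub>M borel) \<and>
       (\<lambda>(v, r). f_wt f v r) \<in> borel_measurable (borel \<Otimes>\<^sub>M borel) \<and>
       (\<forall>v r. 0 \<le> f_wt f v r))"
proof -
  obtain t where t: "t \<in> set (trans P)" and t': "t' = inside_trans B t \<or> t' = escape_trans B (l_out P) M t"
    using assms unfolding set_trans_truncate by blast
  have "{v :: real^'p. PhiB B v} \<in> sets borel" "{v :: real^'p. \<not> PhiB B v} \<in> sets borel"
    using sets_PhiB[OF B] by (auto simp: Compl_eq_Diff_UNIV[symmetric] Collect_neg_eq)
  moreover have "(\<lambda>(v, r). M v) \<in> borel_measurable (borel \<Otimes>\<^sub>M (borel :: (real^'r) measure))"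
    using M_meas by measurable
  ultimately show ?thesis
    using t t' wf M_nonneg by (auto simp: wpts_wf_def comp_def)
qed

lemma truncate_deterministic:
  assumes l': "l' \<in> locs PiBM - term_locs PiBM"
  shows "\<exists>!t'. t' \<in> set (trans PiBM) \<and> t_src t' = l' \<and> v \<in> t_guard t'"
proof -
  obtain l where l': "l' = Some l" and l: "l \<in> locs P - term_locs P" using l' term_out by auto
  let ?t = "enabled_trans P l v"
  have t: "?t \<in> set (trans P)" "t_src ?t = l" "v \<in> t_guard ?t" and lo: "t_src ?t \<noteq> l_out P"
    using enabled_trans[OF wf l] l term_out by auto
  let ?t' = "if PhiB B v then inside_trans B ?t else escape_trans B (l_out P) M ?t"
  show ?thesis
  proof (rule ex1I[of _ ?t'])
    have "inside_trans B ?t \<in> set (trans PiBM)" "escape_trans B (l_out P) M ?t \<in> set (trans PiBM)"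
      unfolding set_trans_truncate using t(1) lo by blast+
    thus "?t' \<in> set (trans PiBM) \<and> t_src ?t' = l' \<and> v \<in> t_guard ?t'"
      using t l' by simp
    fix t2 assume t2: "t2 \<in> set (trans PiBM) \<and> t_src t2 = l' \<and> v \<in> t_guard t2"
    then obtain t1 where t1: "t1 \<in> set (trans P)"
      and t2': "t2 = inside_trans B t1 \<or> t2 = escape_trans B (l_out P) M t1"
      unfolding set_trans_truncate by blast
    have "t1 = ?t" using t2 t2' l' by (intro enabled_trans_eq[OF wf l t1, symmetric]) auto
    thus "t2 = ?t'" using t2 t2' by auto
  qed
qed

lemma wpts_wf_truncate: "wpts_wf PiBM"
  using wf truncate_transitions_wf truncate_deterministic unfolding wpts_wf_def by auto

lemma step_truncate:
  assumes l: "l \<in> locs P - term_locs P"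
  shows "\<exists>f \<in> set (t_forks (enabled_trans P l v)).
    step P (l, v, w) (clamp_choice x) = (f_dest f, f_upd f v (snd x), w * f_wt f v (snd x)) \<and>
    step PiBM (Some l, v, w) (clamp_choice x) =
      (if PhiB B v \<or> f_dest f = l_out P then (Some (f_dest f), f_upd f v (snd x), w * f_wt f v (snd x))
       else (None, f_upd f v (snd x), w * M v))"
proof -
  define t where "t = enabled_trans P l v"
  define j where "j = choose_fork (map f_prob (t_forks t)) (fst (clamp_choice x))"
  have t: "t \<in> set (trans P)" "t_src t = l" "v \<in> t_guard t"
    using enabled_trans[OF wf l] unfolding t_def by auto
  have j: "j < length (t_forks t)" unfolding j_def by (rule choose_fork_clamp_less_length[OF wf t(1)])
  have lo: "t_src t \<noteq> l_out P" using t l term_out by auto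
  define t' where "t' = (if PhiB B v then inside_trans B t else escape_trans B (l_out P) M t)"
  have "inside_trans B t \<in> set (trans PiBM)" "escape_trans B (l_out P) M t \<in> set (trans PiBM)"
    unfolding set_trans_truncate using t(1) lo by blast+
  hence "t' \<in> set (trans PiBM)" "t_src t' = Some l" "v \<in> t_guard t'"
    using t unfolding t'_def by simp_all
  hence enabled: "enabled_trans PiBM (Some l) v = t'"
    using l term_out by (intro enabled_trans_eq[OF wpts_wf_truncate]) auto
  have "map f_prob (t_forks t') = map f_prob (t_forks t)"
    unfolding t'_def by (simp add: comp_def)
  moreover have "t_forks t' ! j =
      (if PhiB B v then lift_fork (t_forks t ! j) else sharp_fork (l_out P) M (t_forks t ! j))"
    unfolding t'_def using j by simp
  ultimately show ?thesis
    using j l term_out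
    by (intro bexI[of _ "t_forks t ! j"])
       (auto simp: step_clamp_nonterm Let_def enabled t_def[symmetric] j_def[symmetric])
qed

definition escapes :: "'l \<Rightarrow> real^'p \<Rightarrow> bool" where
  "escapes l v \<longleftrightarrow> \<not> PhiB B v \<and> (\<exists>f \<in> set (t_forks (enabled_trans P l v)). f_dest f \<noteq> l_out P)"

lemma ew_from_truncate_escape:
  assumes l: "l \<in> locs P - term_locs P" and esc: "escapes l v"
  shows "ew_from PiBM (Some l, v, 1) = ennreal (M v)"
proof -
  interpret prob_space "drive_step PiBM" using prob_space_drive_step[OF wpts_wf_truncate] .
  have "ew_from PiBM (step PiBM (Some l, v, 1) (clamp_choice x)) = ennreal (M v)" for x
  proof -
    obtain f where f: "f \<in> set (t_forks (enabled_trans P l v))"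
      and step: "step PiBM (Some l, v, 1) (clamp_choice x) =
        (if PhiB B v \<or> f_dest f = l_out P then (Some (f_dest f), f_upd f v (snd x), f_wt f v (snd x))
         else (None, f_upd f v (snd x), M v))"
      using step_truncate[OF l, of v 1 x] by auto
    have "f_dest f \<noteq> l_out P"
      using score_at_end_forks_not_out[OF sae enabled_trans(1)[OF wf l] _ f] esc by (simp add: escapes_def)
    thus ?thesis using step esc ew_from_term[OF wpts_wf_truncate]
      by (simp add: escapes_def final_weight_def)
  qed
  thus ?thesis
    using ew_from_step[OF wpts_wf_truncate, of "Some l" v 1] l by (simp add: emeasure_space_1)
qed

text \<open>Before the final score is collected, the weight of a run of \<Pi> is 1.\<close>

definition coupled :: "'l \<times> (real^'p) \<times> real \<Rightarrow> 'l option \<times> (real^'p) \<times> real \<Rightarrow> bool" where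
  "coupled s s' \<longleftrightarrow>
     (\<exists>l v w. s = (l, v, w) \<and> s' = (Some l, v, w) \<and> reachable P l v \<and> (l \<notin> term_locs P \<longrightarrow> w = 1))"

lemma coupled_locs: "coupled s s' \<Longrightarrow> fst s \<in> locs P \<and> fst s' \<in> locs PiBM"
  using reachable_in_locs[OF wf] by (auto simp: coupled_def)

lemma coupled_cases:
  assumes "coupled s s'"
  obtains (agree) "ew_from P s = ew_from PiBM s'"
  | (escape) l v where "s = (l, v, 1)" "s' = (Some l, v, 1)" "reachable P l v"
      "l \<in> locs P - term_locs P" "escapes l v"
  | (step) "fst s \<notin> term_locs P" "fst s' \<notin> term_locs PiBM"
      "\<forall>x. coupled (step P s (clamp_choice x)) (step PiBM s' (clamp_choice x))"
proof -
  obtain l v w where s: "s = (l, v, w)" "s' = (Some l, v, w)" and r: "reachable P l v"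
    and w: "l \<notin> term_locs P \<Longrightarrow> w = 1"
    using assms unfolding coupled_def by blast
  have lL: "l \<in> locs P" using reachable_in_locs[OF wf r] .
  consider "l \<in> term_locs P" | "l \<in> locs P - term_locs P" "escapes l v"
    | "l \<in> locs P - term_locs P" "\<not> escapes l v" using lL by blast
  thus ?thesis
  proof cases
    case 1
    thus ?thesis using agree s term_out ew_from_term[OF wf] ew_from_term[OF wpts_wf_truncate]
      by (simp add: final_weight_def)
  next
    case 2
    thus ?thesis using escape s r w by simp
  next
    case 3
    have "coupled (step P s (clamp_choice x)) (step PiBM s' (clamp_choice x))" for x
    proof -
      obtain f where f: "f \<in> set (t_forks (enabled_trans P l v))"
        and steps: "step P s (clamp_choice x) = (f_dest f, f_upd f v (snd x), f_wt f v (snd x))"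
          "step PiBM s' (clamp_choice x) = (Some (f_dest f), f_upd f v (snd x), f_wt f v (snd x))"
        using step_truncate[OF 3(1), of v w x] 3 w by (auto simp: s escapes_def)
      have "reachable P (f_dest f) (f_upd f v (snd x))"
        using 3(1) by (intro reachable.step[OF r _ refl f]) simp
      moreover have "f_dest f \<notin> term_locs P \<Longrightarrow> f_wt f v (snd x) = 1"
        using score_at_end_wt[OF sae enabled_trans(1)[OF wf 3(1)] f] term_out by auto
      ultimately show ?thesis unfolding coupled_def steps by blast
    qed
    thus ?thesis using step 3 term_out s by auto
  qed
qed

lemma coupled_init: "v \<in> msupp (mu_init P) \<Longrightarrow> coupled (l_init P, v, 1) (Some (l_init P), v, 1)"
  using reachable.init[of v P] wf by (auto simp: coupled_def wpts_wf_def)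

lemma total_mass_le_truncate:
  assumes H: "\<forall>t \<in> set (trans P). (\<exists>f \<in> set (t_forks t). f_dest f \<noteq> l_out P) \<longrightarrow>
      (\<forall>v. reachable P (t_src t) v \<and> v \<in> t_guard t \<and> \<not> PhiB B v \<longrightarrow> ew P (t_src t) v \<le> ennreal (M v))"
    and v: "v \<in> msupp (mu_init P)"
  shows "total_mass P v \<le> total_mass PiBM v"
proof -
  have "ew_from P s \<le> ew_from PiBM s' \<or> fst s \<notin> term_locs P \<and>
      (\<forall>x. coupled (step P s (clamp_choice x)) (step PiBM s' (clamp_choice x)))" if "coupled s s'" for s s'
    using that
  proof (cases rule: coupled_cases)
    case (escape l v)
    hence "ew P l v \<le> ennreal (M v)"
      using H enabled_trans[OF wf escape(4), of v] by (auto simp: escapes_def)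
    thus ?thesis using escape ew_eq_ew_from[OF wf] ew_from_truncate_escape by simp
  qed simp_all
  thus ?thesis
    using ew_from_le_by_coupling[OF wf wpts_wf_truncate _ coupled_locs] total_mass_eq_ew_from[OF wf] total_mass_eq_ew_from[OF wpts_wf_truncate]
      coupled_init[OF v]
    by simp
qed

lemma truncate_le_total_mass:
  assumes H: "\<forall>t \<in> set (trans P). (\<exists>f \<in> set (t_forks t). f_dest f \<noteq> l_out P) \<longrightarrow>
      (\<forall>v. reachable P (t_src t) v \<and> v \<in> t_guard t \<and> \<not> PhiB B v \<longrightarrow> ennreal (M v) \<le> ew P (t_src t) v)"
    and v: "v \<in> msupp (mu_init P)"
  shows "total_mass PiBM v \<le> total_mass P v"
proof -
  have "ew_from PiBM s' \<le> ew_from P s \<or> fst s' \<notin> term_locs PiBM \<and>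
      (\<forall>x. coupled (step P s (clamp_choice x)) (step PiBM s' (clamp_choice x)))" if "coupled s s'" for s s'
    using that
  proof (cases rule: coupled_cases)
    case (escape l v)
    hence "ennreal (M v) \<le> ew P l v"
      using H enabled_trans[OF wf escape(4), of v] by (auto simp: escapes_def)
    thus ?thesis using escape ew_eq_ew_from[OF wf] ew_from_truncate_escape by simp
  qed simp_all
  thus ?thesis
    using ew_from_le_by_coupling[OF wpts_wf_truncate wf _ _, where R = "\<lambda>s' s. coupled s s'"]
      coupled_locs total_mass_eq_ew_from[OF wf] total_mass_eq_ew_from[OF wpts_wf_truncate] coupled_init[OF v]
    by simp
qed

end

theorem theoremC2:
  fixes P :: "('l, 'p::finite, 'r::finite) wpts"
    and B :: "'p \<Rightarrow> real set"
    and M :: "real^'p \<Rightarrow> real"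
  assumes wf: "wpts_wf P"
    and term_out: "term_locs P = {l_out P}"
    and sae: "score_at_end P"
    and B: "truncation_fun B"
    and M_nonneg: "\<forall>v. 0 \<le> M v"
    and M_bounded: "\<exists>K. \<forall>v. M v \<le> K"
    and M_meas: "M \<in> borel_measurable borel"
  shows "((\<forall>t \<in> set (trans P). (\<exists>f \<in> set (t_forks t). f_dest f \<noteq> l_out P) \<longrightarrow>
             (\<forall>v. reachable P (t_src t) v \<and> v \<in> t_guard t \<and> \<not> PhiB B v \<longrightarrow>
                  ew P (t_src t) v \<le> ennreal (M v)))
          \<longrightarrow> (\<forall>v \<in> msupp (mu_init P). total_mass P v \<le> total_mass (truncate P B M) v))
       \<and> ((\<forall>t \<in> set (trans P). (\<exists>f \<in> set (t_forks t). f_dest f \<noteq> l_out P) \<longrightarrow>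
             (\<forall>v. reachable P (t_src t) v \<and> v \<in> t_guard t \<and> \<not> PhiB B v \<longrightarrow>
                  ennreal (M v) \<le> ew P (t_src t) v))
          \<longrightarrow> (\<forall>v \<in> msupp (mu_init P). total_mass (truncate P B M) v \<le> total_mass P v))"
proof -
  interpret truncation P B M
    using wf term_out sae B M_nonneg M_meas by unfold_locales
  show ?thesis using total_mass_le_truncate truncate_le_total_mass by blast
qed

end
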